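(* Consider the two-tubes TFE equations (defined in the context). There exist exactly two propagating terraces consisting of two traveling waves connecting $(-1,-1)$ to $(1,1)$ (traveling wave profiles counted up to translation of the variable $y-vt$). In both, the speeds are $v_1^*=-1/4$ and $v_2^*=1/4$; the intermediate state is $\sigma_1=(1/2,-1/2)$ for one of them and $\sigma_1=(-1/2,1/2)$ for the other. That is, the terraces are $\sigma_0=(-1,-1)\to\sigma_1\to\sigma_2=(1,1)$ with $\sigma_1\in\{(1/2,-1/2),(-1/2,1/2)\}$.
   Context: Two-tubes TFE equations: unknowns $c_1,c_2$, real functions of $(t,y)\in[0,\infty)\times\mathbb{R}$, satisfying $$\partial_t c_1+\partial_y(u_1c_1)-\partial_{yy}c_1=-f,\qquad \partial_t c_2+\partial_y(u_2c_2)-\partial_{yy}c_2=f,$$ with $u_1=(c_2-c_1)/2$, $u_2=-u_1$, and $f=-(\partial_y u_1)\,c_1$ if $\partial_y u_1\le 0$, $f=-(\partial_y u_1)\,c_2$ if $\partial_y u_1\ge0$. A traveling wave with speed $v$ connecting $g_-,g_+\in\mathbb{R}^2$ is a solution of the form $(c_1,c_2)(t,y)=\tilde g(y-vt)$ with $\tilde g:\mathbb{R}\to\mathbb{R}^2$ continuous (and smooth enough to solve the equations classically), $\tilde g(-\infty)=g_-$, $\tilde g(+\infty)=g_+$. A propagating terrace connecting $\alpha$ to $\beta$ ($\alpha,\beta\in\mathbb{R}^2$) is a pair of finite sequences $(\sigma_k)_{0\le k\le N}$, $(g_k)_{1\le k\le N}$ with each $\sigma_k\in\mathbb{R}^2$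 a stationary (constant) solution, $\sigma_0=\alpha$, $\sigma_N=\beta$, each $g_k$ a traveling wave connecting $\sigma_{k-1}$ to $\sigma_k$ with speed $v_k$, and $v_1\le\dots\le v_N$. "Two traveling waves" means $N=2$. *)

theory Defs
  imports "HOL-Analysis.Analysis"
begin

text \<open>Exchange term f of the two-tubes TFE system, as a function of
  the value of the y-derivative of u_1 and of c_1, c_2.\<close>
definition tfe_exchange :: "real \<Rightarrow> real \<Rightarrow> real \<Rightarrow> real" where
  "tfe_exchange du1 a b = (if du1 \<le> 0 then - du1 * a else - du1 * b)"

text \<open>Classical solution on [0,oo) x R.  c1, c2 take arguments (t, y).
  d1t, d1y, d1yy etc. are the classical partial derivatives; the term
  d_y(u_1 c_1) is written out by the product rule (both factors are
  differentiable in y).  u_1 = (c2 - c1)/2, u_2 = - u_1.\<close>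
definition tfe_classical_solution ::
  "(real \<Rightarrow> real \<Rightarrow> real) \<Rightarrow> (real \<Rightarrow> real \<Rightarrow> real) \<Rightarrow> bool" where
  "tfe_classical_solution c1 c2 \<longleftrightarrow>
     (\<exists>d1t d2t d1y d2y d1yy d2yy :: real \<Rightarrow> real \<Rightarrow> real.
       \<forall>t y. t \<ge> 0 \<longrightarrow>
         ((\<lambda>s. c1 s y) has_real_derivative d1t t y) (at t within {0..}) \<and>
         ((\<lambda>s. c2 s y) has_real_derivative d2t t y) (at t within {0..}) \<and>
         ((\<lambda>z. c1 t z) has_real_derivative d1y t y) (at y) \<and>
         ((\<lambda>z. c2 t z) has_real_derivative d2y t y) (at y) \<and>
         ((\<lambda>z. d1y t z) has_real_derivative d1yy t y) (at y) \<and>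
         ((\<lambda>z. d2y t z) has_real_derivative d2yy t y) (at y) \<and>
         (let u1 = (c2 t y - c1 t y) / 2;
              du1 = (d2y t y - d1y t y) / 2;
              u2 = - u1; du2 = - du1;
              f = tfe_exchange du1 (c1 t y) (c2 t y)
          in d1t t y + (du1 * c1 t y + u1 * d1y t y) - d1yy t y = - f \<and>
             d2t t y + (du2 * c2 t y + u2 * d2y t y) - d2yy t y = f))"

definition tfe_stationary :: "real \<times> real \<Rightarrow> bool" where
  "tfe_stationary s \<longleftrightarrow>
     tfe_classical_solution (\<lambda>t y. fst s) (\<lambda>t y. snd s)"

definition tfe_traveling_wave ::
  "(real \<Rightarrow> real \<times> real) \<Rightarrow> real \<Rightarrow> real \<times> real \<Rightarrow> real \<times> real \<Rightarrow> bool" where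
  "tfe_traveling_wave g v gm gp \<longleftrightarrow>
     continuous_on UNIV g \<and>
     tfe_classical_solution (\<lambda>t y. fst (g (y - v * t))) (\<lambda>t y. snd (g (y - v * t))) \<and>
     (g \<longlongrightarrow> gm) at_bot \<and> (g \<longlongrightarrow> gp) at_top"

definition tfe_terrace2 ::
  "real \<times> real \<Rightarrow> real \<times> real \<Rightarrow> real \<times> real \<Rightarrow>
   (real \<Rightarrow> real \<times> real) \<Rightarrow> real \<Rightarrow> (real \<Rightarrow> real \<times> real) \<Rightarrow> real \<Rightarrow> bool" where
  "tfe_terrace2 \<alpha> \<sigma>1 \<beta> g1 v1 g2 v2 \<longleftrightarrow>
     tfe_stationary \<alpha> \<and> tfe_stationary \<sigma>1 \<and> tfe_stationary \<beta> \<and>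
     tfe_traveling_wave g1 v1 \<alpha> \<sigma>1 \<and> tfe_traveling_wave g2 v2 \<sigma>1 \<beta> \<and> v1 \<le> v2"

end

theory Submission
  imports Defs
begin

(*
  A traveling wave c(t, y) = (p, q)(y - v t) reduces the system to a second-order ODE for the
  profile, in which the exchange term only enters through max and min of u_1' = (q' - p') / 2.
  Along a profile leaving (-1, -1) the quantity p' + q' + v (p + q) + (q - p)^2 / 2 is conserved,
  which ties the speed to the end state (a, b): v (a + b + 2) = - (b - a)^2 / 2.

  For such a front with v < 0 and a > b, a Gronwall argument combined with the connectedness of
  the line shows that u_1' < 0 everywhere.  Then 3 q' - p' solves a linear equation with
  nonnegative coefficient while being the derivative of a convergent function, hence vanishes:
  the profile lies on the line 3 q - p + 2 = 0 and (a, b) = (-1 - 6 v, -1 - 2 v).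

  The point reflection (p, q)(x) |-> - (p, q)(- x) turns the second wave of a terrace into a
  front leaving (-1, -1) with speed - v_2.  The constraints on both waves together with
  v_1 <= v_2 leave only v_1 = -1/4, v_2 = 1/4 and sigma_1 = (1/2, -1/2) or (-1/2, 1/2).  At these
  speeds w = p + q + 2 solves the logistic equation w' = w (2 - w) / 8, whose orbits from 0 to 2
  are the translates of 1 + tanh (x / 8); this gives existence and uniqueness up to translation.
*)

section \<open>Linear differential equations and inequalities on the line\<close>

lemma gronwall_vanishes:
  fixes h h' :: "real \<Rightarrow> real"
  assumes deriv: "\<And>y. y \<in> {a..b} \<Longrightarrow> (h has_real_derivative h' y) (at y)"
    and bound: "\<And>y. y \<in> {a..b} \<Longrightarrow> \<bar>h' y\<bar> \<le> L * h y"
    and nonneg: "\<And>y. y \<in> {a..b} \<Longrightarrow> 0 \<le> h y"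
    and c: "c \<in> {a..b}" "h c = 0" and x: "x \<in> {a..b}"
  shows "h x = 0"
proof -
  have between: "y \<in> {a..b}" if "min c x \<le> y" "y \<le> max c x" for y
    using that c x by auto
  have "h x \<le> 0"
  proof (cases "c \<le> x")
    case True
    have "exp (- L * x) * h x \<le> exp (- L * c) * h c"
    proof (rule DERIV_nonpos_imp_nonincreasing[OF True])
      fix y assume "c \<le> y" "y \<le> x"
      then have y: "y \<in> {a..b}" using between by simp
      have "exp (- L * y) * (h' y - L * h y) \<le> 0"
        using bound[OF y] by (intro mult_nonneg_nonpos) auto
      moreover have "((\<lambda>y. exp (- L * y) * h y) has_real_derivative
          exp (- L * y) * (h' y - L * h y)) (at y)"
        by (auto intro!: derivative_eq_intros deriv[OF y] simp: algebra_simps)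
      ultimately show "\<exists>z. ((\<lambda>y. exp (- L * y) * h y) has_real_derivative z) (at y) \<and> z \<le> 0"
        by blast
    qed
    then show ?thesis using c by (simp add: mult_le_0_iff)
  next
    case False
    have "exp (L * x) * h x \<le> exp (L * c) * h c"
    proof (rule DERIV_nonneg_imp_nondecreasing[of x c "\<lambda>y. exp (L * y) * h y"])
      show "x \<le> c" using False by simp
      fix y assume "x \<le> y" "y \<le> c"
      then have y: "y \<in> {a..b}" using between by simp
      have "0 \<le> exp (L * y) * (h' y + L * h y)"
        using bound[OF y] by (intro mult_nonneg_nonneg) auto
      moreover have "((\<lambda>y. exp (L * y) * h y) has_real_derivative
          exp (L * y) * (h' y + L * h y)) (at y)"
        by (auto intro!: derivative_eq_intros deriv[OF y] simp: algebra_simps)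
      ultimately show "\<exists>z. ((\<lambda>y. exp (L * y) * h y) has_real_derivative z) (at y) \<and> z \<ge> 0"
        by blast
    qed
    then show ?thesis using c by (simp add: mult_le_0_iff)
  qed
  with nonneg[OF x] show ?thesis by linarith
qed

lemma pair_vanishes:
  fixes X Y X' Y' :: "real \<Rightarrow> real"
  assumes deriv: "\<And>y. y \<in> {a..b} \<Longrightarrow>
      (X has_real_derivative X' y) (at y) \<and> (Y has_real_derivative Y' y) (at y)"
    and bound: "\<And>y. y \<in> {a..b} \<Longrightarrow> \<bar>X' y\<bar> + \<bar>Y' y\<bar> \<le> K * (\<bar>X y\<bar> + \<bar>Y y\<bar>)"
    and "c \<in> {a..b}" "X c = 0" "Y c = 0" and x: "x \<in> {a..b}"
  shows "X x = 0 \<and> Y x = 0"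
proof -
  define h where "h y = X y * X y + Y y * Y y" for y
  have "h x = 0"
  proof (rule gronwall_vanishes[where h = h and x = x and c = c
        and h' = "\<lambda>y. 2 * (X y * X' y + Y y * Y' y)" and L = "4 * \<bar>K\<bar>"])
    fix y assume y: "y \<in> {a..b}"
    have dX: "(X has_real_derivative X' y) (at y)" and dY: "(Y has_real_derivative Y' y) (at y)"
      using deriv[OF y] by auto
    show "(h has_real_derivative 2 * (X y * X' y + Y y * Y' y)) (at y)"
      unfolding h_def[abs_def] by (auto intro!: derivative_eq_intros dX dY simp: algebra_simps)
    let ?s = "\<bar>X y\<bar> + \<bar>Y y\<bar>"
    have "\<bar>X y * X' y + Y y * Y' y\<bar> \<le> \<bar>X y\<bar> * \<bar>X' y\<bar> + \<bar>Y y\<bar> * \<bar>Y' y\<bar>"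
      using abs_triangle_ineq[of "X y * X' y" "Y y * Y' y"] by (simp add: abs_mult)
    also have "\<dots> \<le> ?s * (\<bar>X' y\<bar> + \<bar>Y' y\<bar>)"
      by (simp add: distrib_right ring_class.ring_distribs(1))
    also have "\<dots> \<le> ?s * (\<bar>K\<bar> * ?s)"
    proof (rule mult_left_mono)
      show "\<bar>X' y\<bar> + \<bar>Y' y\<bar> \<le> \<bar>K\<bar> * ?s"
        using bound[OF y] mult_right_mono[OF abs_ge_self[of K], of ?s] by simp
    qed simp
    also have "\<dots> \<le> \<bar>K\<bar> * (2 * h y)"
    proof -
      have "0 \<le> (\<bar>X y\<bar> - \<bar>Y y\<bar>) * (\<bar>X y\<bar> - \<bar>Y y\<bar>)" by simp
      then have "?s * ?s \<le> 2 * h y" unfolding h_def by (simp add: algebra_simps abs_mult_self_eq)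
      then show ?thesis by (simp add: mult_left_mono mult.left_commute[of "?s"])
    qed
    finally show "\<bar>2 * (X y * X' y + Y y * Y' y)\<bar> \<le> 4 * \<bar>K\<bar> * h y" by simp
    show "0 \<le> h y" unfolding h_def by simp
  qed (use assms in \<open>auto simp: h_def\<close>)
  then show ?thesis unfolding h_def by (simp add: add_nonneg_eq_0_iff)
qed

lemma linear_ode_vanishes:
  fixes X k :: "real \<Rightarrow> real"
  assumes deriv: "\<And>y. y \<in> {a..b} \<Longrightarrow> (X has_real_derivative k y * X y) (at y)"
    and "continuous_on {a..b} k"
    and "c \<in> {a..b}" "X c = 0" "x \<in> {a..b}"
  shows "X x = 0"
proof -
  obtain M where M: "\<And>y. y \<in> {a..b} \<Longrightarrow> \<bar>k y\<bar> \<le> M"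
    using continuous_on_compact_bound[of "{a..b}" k] assms(2) by auto
  have "X x = 0 \<and> (\<lambda>_. 0::real) x = 0"
  proof (rule pair_vanishes[where X = X and Y = "\<lambda>_. 0" and x = x and c = c and K = M])
    fix y assume y: "y \<in> {a..b}"
    show "(X has_real_derivative k y * X y) (at y) \<and> ((\<lambda>_. 0) has_real_derivative 0) (at y)"
      using deriv[OF y] by simp
    show "\<bar>k y * X y\<bar> + \<bar>0\<bar> \<le> M * (\<bar>X y\<bar> + \<bar>0\<bar>)"
      using M[OF y] by (simp add: abs_mult mult_right_mono)
  qed (use assms in auto)
  then show ?thesis by simp
qed

lemma linear_ode_vanishes_near:
  fixes X k :: "real \<Rightarrow> real"
  assumes "\<forall>\<^sub>F y in nhds z. (X has_real_derivative k y * X y) (at y)"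
    and "continuous_on UNIV k" and "X z = 0"
  shows "\<forall>\<^sub>F y in nhds z. X y = 0"
proof -
  obtain r where r: "r > 0" "\<And>y. dist y z < r \<Longrightarrow> (X has_real_derivative k y * X y) (at y)"
    using assms(1) unfolding eventually_nhds_metric by blast
  have "X y = 0" if "dist y z < r / 2" for y
  proof (rule linear_ode_vanishes[where X = X and k = k and x = y and c = z
        and a = "z - r / 2" and b = "z + r / 2"])
    show "continuous_on {z - r / 2..z + r / 2} k"
      using assms(2) by (rule continuous_on_subset) simp
    show "y \<in> {z - r / 2..z + r / 2}"
      using that unfolding dist_real_def atLeastAtMost_iff by arith
  qed (use r assms(3) in \<open>auto simp: dist_real_def\<close>)
  then show ?thesis
    unfolding eventually_nhds_metric using \<open>r > 0\<close> by (intro exI[of _ "r / 2"]) auto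
qed

lemma eventually_nhds_less:
  fixes f g :: "real \<Rightarrow> real"
  assumes "continuous_on UNIV f" "continuous_on UNIV g" "f z < g z"
  shows "\<forall>\<^sub>F y in nhds z. f y < g y"
  using eventually_nhds_in_open[OF open_Collect_less[OF assms(1,2)], of z] assms(3) by simp

text \<open>The positivity set is open, and by the hypothesis on the zeros so is its complement.\<close>
lemma positive_everywhere:
  fixes m :: "real \<Rightarrow> real"
  assumes cont: "continuous_on UNIV m"
    and zeros: "\<And>z. m z = 0 \<Longrightarrow> \<forall>\<^sub>F y in nhds z. m y \<le> 0"
    and "m c > 0"
  shows "m x > 0"
proof -
  have "open {y. m y > 0}"
    using cont by (intro open_Collect_less) (auto intro: continuous_intros)
  moreover have "open (- {y. m y > 0})"
  proof (rule Topological_Spaces.openI)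
    fix z assume "z \<in> - {y. m y > 0}"
    then consider "m z < 0" | "m z = 0" by force
    then have "\<forall>\<^sub>F y in nhds z. m y \<le> 0"
    proof cases
      case 1
      have "\<forall>\<^sub>F y in nhds z. m y < 0"
        using eventually_nhds_less[OF cont continuous_on_const 1] .
      then show ?thesis by eventually_elim simp
    qed (rule zeros)
    then obtain T where "open T" "z \<in> T" "\<forall>y\<in>T. m y \<le> 0"
      unfolding eventually_nhds by blast
    then show "\<exists>T. open T \<and> z \<in> T \<and> T \<subseteq> - {y. m y > 0}"
      by (intro exI[of _ T]) auto
  qed
  ultimately have "{y. m y > 0} = UNIV"
    using clopen[of "{y. m y > 0}"] \<open>m c > 0\<close> unfolding closed_def by blast
  then show ?thesis by auto
qed

lemma linear_ode_positive:
  fixes X k :: "real \<Rightarrow> real"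
  assumes deriv: "\<And>y. (X has_real_derivative k y * X y) (at y)"
    and "continuous_on UNIV k" and "X c > 0"
  shows "X x > 0"
proof (rule positive_everywhere[of X])
  show "continuous_on UNIV X"
    using deriv by (intro continuous_at_imp_continuous_on) (auto intro: DERIV_isCont)
  fix z assume "X z = 0"
  then have "\<forall>\<^sub>F y in nhds z. X y = 0"
    using assms by (intro linear_ode_vanishes_near) auto
  then show "\<forall>\<^sub>F y in nhds z. X y \<le> 0"
    by eventually_elim simp
qed (rule assms(3))

lemma pair_positive_everywhere:
  fixes X Y :: "real \<Rightarrow> real"
  assumes "continuous_on UNIV X" "continuous_on UNIV Y"
    and X_zeros: "\<And>z. X z = 0 \<Longrightarrow> Y z \<ge> 0 \<Longrightarrow> \<forall>\<^sub>F y in nhds z. X y = 0"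
    and Y_zeros: "\<And>z. Y z = 0 \<Longrightarrow> X z \<ge> 0 \<Longrightarrow> \<forall>\<^sub>F y in nhds z. Y y = 0"
    and "X c > 0" "Y c > 0"
  shows "X x > 0 \<and> Y x > 0"
proof -
  have "min (X x) (Y x) > 0"
  proof (rule positive_everywhere[of "\<lambda>y. min (X y) (Y y)"])
    show "continuous_on UNIV (\<lambda>y. min (X y) (Y y))"
      using assms(1,2) by (intro continuous_intros)
    fix z assume "min (X z) (Y z) = 0"
    then consider "X z = 0" "Y z \<ge> 0" | "Y z = 0" "X z \<ge> 0"
      by (metis min.cobounded1 min.cobounded2 min_def)
    then show "\<forall>\<^sub>F y in nhds z. min (X y) (Y y) \<le> 0"
    proof cases
      case 1
      from X_zeros[OF 1] show ?thesis by eventually_elim simp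
    next
      case 2
      from Y_zeros[OF 2] show ?thesis by eventually_elim simp
    qed
  qed (use assms in simp)
  then show ?thesis by simp
qed

lemma tendsto_at_top_deriv_lower_bound_nonpos:
  fixes f f' :: "real \<Rightarrow> real"
  assumes lim: "(f \<longlongrightarrow> L) at_top"
    and deriv: "\<And>x. x \<ge> R \<Longrightarrow> (f has_real_derivative f' x) (at x)"
    and bound: "\<And>x. x \<ge> R \<Longrightarrow> c \<le> f' x"
  shows "c \<le> 0"
proof (rule ccontr)
  assume "\<not> c \<le> 0"
  then have "c > 0" by simp
  have growth: "f R + c * (x - R) \<le> f x" if "R \<le> x" for x
  proof -
    have "f R - c * R \<le> f x - c * x"
    proof (rule DERIV_nonneg_imp_nondecreasing[of R x "\<lambda>y. f y - c * y", OF that])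
      fix y assume "R \<le> y"
      then show "\<exists>z. ((\<lambda>y. f y - c * y) has_real_derivative z) (at y) \<and> z \<ge> 0"
        using deriv bound by (intro exI[of _ "f' y - c"]) (auto intro!: derivative_eq_intros)
    qed
    then show ?thesis by (simp add: algebra_simps)
  qed
  obtain N where N: "\<And>x. x \<ge> N \<Longrightarrow> f x < L + 1"
    using order_tendstoD(2)[OF lim, of "L + 1"] by (auto simp: eventually_at_top_linorder)
  define x where "x = max (max N R) (R + (L + 1 - f R) / c + 1)"
  have "R \<le> x" "N \<le> x" unfolding x_def by auto
  have "c * ((L + 1 - f R) / c + 1) \<le> c * (x - R)"
    using \<open>c > 0\<close> unfolding x_def by (intro mult_left_mono) auto
  moreover have "c * ((L + 1 - f R) / c + 1) = L + 1 - f R + c"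
    using \<open>c > 0\<close> by (simp add: field_simps)
  ultimately have "L + 1 - f R + c \<le> c * (x - R)" by simp
  with growth[OF \<open>R \<le> x\<close>] N[OF \<open>N \<le> x\<close>] \<open>c > 0\<close> show False by linarith
qed

lemma deriv_tendsto_zero_at_top:
  fixes f f' :: "real \<Rightarrow> real"
  assumes "(f \<longlongrightarrow> L) at_top" "\<And>x. (f has_real_derivative f' x) (at x)" "(f' \<longlongrightarrow> M) at_top"
  shows "M = 0"
proof -
  have "M \<le> 0" if lim: "(g \<longlongrightarrow> K) at_top" and deriv: "\<And>x. (g has_real_derivative g' x) (at x)"
    and lim': "(g' \<longlongrightarrow> M) at_top" for g g' :: "real \<Rightarrow> real" and K M
  proof (rule dense_le)
    fix c assume "c < M"
    then obtain R where "\<And>x. x \<ge> R \<Longrightarrow> c < g' x"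
      using order_tendstoD(1)[OF lim'] by (auto simp: eventually_at_top_linorder)
    then show "c \<le> 0"
      using tendsto_at_top_deriv_lower_bound_nonpos[OF lim deriv] less_imp_le by blast
  qed
  from this[OF assms] this[of "\<lambda>x. - f x" "- L" "\<lambda>x. - f' x" "- M"] assms show ?thesis
    by (force intro!: tendsto_intros derivative_eq_intros)
qed

lemma deriv_tendsto_zero_at_bot:
  fixes f f' :: "real \<Rightarrow> real"
  assumes "(f \<longlongrightarrow> L) at_bot" "\<And>x. (f has_real_derivative f' x) (at x)" "(f' \<longlongrightarrow> M) at_bot"
  shows "M = 0"
proof -
  have "- M = 0"
  proof (rule deriv_tendsto_zero_at_top[of "\<lambda>x. f (- x)" L "\<lambda>x. - f' (- x)"])
    show "((\<lambda>x. f (- x)) \<longlongrightarrow> L) at_top" "((\<lambda>x. - f' (- x)) \<longlongrightarrow> - M) at_top"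
      using assms(1,3) by (auto simp: at_bot_mirror filterlim_filtermap o_def intro: tendsto_intros)
    show "((\<lambda>x. f (- x)) has_real_derivative - f' (- x)) (at x)" for x
      using assms(2)[of "- x"] by (simp add: DERIV_mirror)
  qed
  then show ?thesis by simp
qed

lemma deriv_nonpos_between_limits:
  fixes f f' :: "real \<Rightarrow> real"
  assumes deriv: "\<And>x. (f has_real_derivative f' x) (at x)" and nonpos: "\<And>x. f' x \<le> 0"
    and "(f \<longlongrightarrow> l) at_bot" "(f \<longlongrightarrow> u) at_top"
  shows "u \<le> f x" "f x \<le> l"
proof -
  have mono: "f z \<le> f y" if "y \<le> z" for y z
    using DERIV_nonpos_imp_nonincreasing[OF that, of f] deriv nonpos by blast
  show "u \<le> f x"
    by (rule tendsto_upperbound[OF assms(4)]) (auto simp: eventually_at_top_linorder intro: mono)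
  show "f x \<le> l"
    by (rule tendsto_lowerbound[OF assms(3)]) (auto simp: eventually_at_bot_linorder intro: mono)
qed

lemma deriv_zero_eq_limit:
  fixes f :: "real \<Rightarrow> real"
  assumes "\<And>x. (f has_real_derivative 0) (at x)" "(f \<longlongrightarrow> l) F" "F \<noteq> bot"
  shows "f x = l"
proof -
  have "f = (\<lambda>_. f x)"
    using DERIV_isconst_all[of f] assms(1) by blast
  with assms(2,3) show ?thesis by (metis tendsto_const_iff)
qed

lemma linear_ode_deriv_of_convergent_vanishes:
  fixes Z A k :: "real \<Rightarrow> real"
  assumes "\<And>x. (Z has_real_derivative A x) (at x)"
    and "\<And>x. (A has_real_derivative k x * A x) (at x)"
    and "continuous_on UNIV k" and k_nonneg: "\<And>x. 0 \<le> k x"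
    and "(Z \<longlongrightarrow> L) at_top"
  shows "A x = 0"
proof -
  have "\<not> B c > 0"
    if dW: "\<And>x. (W has_real_derivative B x) (at x)"
      and dB: "\<And>x. (B has_real_derivative k x * B x) (at x)"
      and lim: "(W \<longlongrightarrow> K) at_top" for W B :: "real \<Rightarrow> real" and K c
  proof
    assume "B c > 0"
    then have pos: "B x > 0" for x
      using linear_ode_positive[OF dB \<open>continuous_on UNIV k\<close>] by blast
    have "B c \<le> B x" if "c \<le> x" for x
    proof (rule DERIV_nonneg_imp_nondecreasing[OF that])
      fix y
      show "\<exists>z. (B has_real_derivative z) (at y) \<and> z \<ge> 0"
        using dB[of y] k_nonneg[of y] pos[of y] by auto
    qed
    then have "B c \<le> 0"
      using tendsto_at_top_deriv_lower_bound_nonpos[OF lim dW] by blast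
    with \<open>B c > 0\<close> show False by simp
  qed
  from this[of Z A L x] this[of "\<lambda>x. - Z x" "\<lambda>x. - A x" "- L" x] assms show ?thesis
    by (force intro!: tendsto_intros derivative_eq_intros simp: algebra_simps)
qed

section \<open>Traveling wave profiles\<close>

lemma tfe_exchange_eq_max: "du * a + tfe_exchange du a b = - (b - a) * max du 0"
  by (simp add: tfe_exchange_def max_def algebra_simps)

lemma tfe_exchange_eq_min: "du * b + tfe_exchange du a b = (b - a) * min du 0"
  by (simp add: tfe_exchange_def min_def algebra_simps)

text \<open>The profile equations \<open>p'' = - v p' + (u\<^sub>1 p)' + f\<close> and \<open>q'' = - v q' - (u\<^sub>1 q)' - f\<close>
  of a traveling wave \<open>(p, q)\<close> of speed \<open>v\<close>, as a first-order system with \<open>P = p'\<close> and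
  \<open>Q = q'\<close>; the exchange term is absorbed by the identities above.\<close>
definition tw_ode ::
  "real \<Rightarrow> (real \<Rightarrow> real) \<Rightarrow> (real \<Rightarrow> real) \<Rightarrow> (real \<Rightarrow> real) \<Rightarrow> (real \<Rightarrow> real) \<Rightarrow> bool" where
  "tw_ode v p q P Q \<longleftrightarrow> (\<forall>x.
     (p has_real_derivative P x) (at x) \<and> (q has_real_derivative Q x) (at x) \<and>
     (P has_real_derivative ((q x - p x) / 2 - v) * P x - (q x - p x) * max ((Q x - P x) / 2) 0) (at x) \<and>
     (Q has_real_derivative - ((q x - p x) / 2 + v) * Q x - (q x - p x) * min ((Q x - P x) / 2) 0) (at x))"

lemma DERIV_moving_frame_time:
  assumes "(f has_real_derivative D) (at (y - v * t))"
  shows "((\<lambda>s. f (y - v * s)) has_real_derivative - v * D) (at t within S)"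
proof -
  have "((\<lambda>s. y - v * s) has_real_derivative - v) (at t within S)"
    by (auto intro!: derivative_eq_intros)
  from DERIV_chain2[OF assms this] show ?thesis by (simp add: mult.commute)
qed

lemma DERIV_moving_frame_space:
  assumes "(f has_real_derivative D) (at (y - v * t))"
  shows "((\<lambda>z. f (z - v * t)) has_real_derivative D) (at y)"
proof -
  have "((\<lambda>z. z - v * t) has_real_derivative 1) (at y)"
    by (auto intro!: derivative_eq_intros)
  from DERIV_chain2[OF assms this] show ?thesis by simp
qed

lemma DERIV_moving_frame_time_unique:
  assumes "((\<lambda>s. f (y - v * s)) has_real_derivative D') (at 0 within {0..})"
    and "(f has_real_derivative D) (at y)"
  shows "D' = - v * D"
proof -
  have "{0::real..} - {0} = {0<..}" by auto
  then have "at (0::real) within {0..} \<noteq> bot"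
    by (simp add: at_within_eq_bot_iff)
  moreover have "((\<lambda>s. f (y - v * s)) has_real_derivative - v * D) (at 0 within {0..})"
    using DERIV_moving_frame_time[of f D y v 0] assms(2) by simp
  ultimately show ?thesis
    using has_field_derivative_unique assms(1) by blast
qed

lemma tw_ode_of_tfe_traveling_wave:
  assumes "tfe_traveling_wave g v gm gp"
  obtains P Q where "tw_ode v (\<lambda>x. fst (g x)) (\<lambda>x. snd (g x)) P Q"
proof -
  define p where "p x = fst (g x)" for x
  define q where "q x = snd (g x)" for x
  have "tfe_classical_solution (\<lambda>t y. p (y - v * t)) (\<lambda>t y. q (y - v * t))"
    using assms by (simp add: tfe_traveling_wave_def p_def q_def)
  then obtain d1t d2t d1y d2y d1yy d2yy :: "real \<Rightarrow> real \<Rightarrow> real" where H: "\<And>y.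
      ((\<lambda>s. p (y - v * s)) has_real_derivative d1t 0 y) (at 0 within {0..}) \<and>
      ((\<lambda>s. q (y - v * s)) has_real_derivative d2t 0 y) (at 0 within {0..}) \<and>
      (p has_real_derivative d1y 0 y) (at y) \<and> (q has_real_derivative d2y 0 y) (at y) \<and>
      (d1y 0 has_real_derivative d1yy 0 y) (at y) \<and> (d2y 0 has_real_derivative d2yy 0 y) (at y) \<and>
      d1t 0 y + ((d2y 0 y - d1y 0 y) / 2 * p y + (q y - p y) / 2 * d1y 0 y) - d1yy 0 y
        = - tfe_exchange ((d2y 0 y - d1y 0 y) / 2) (p y) (q y) \<and>
      d2t 0 y + (- ((d2y 0 y - d1y 0 y) / 2) * q y + - ((q y - p y) / 2) * d2y 0 y) - d2yy 0 y
        = tfe_exchange ((d2y 0 y - d1y 0 y) / 2) (p y) (q y)"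
    unfolding tfe_classical_solution_def Let_def by (fastforce simp: fun_eq_iff)
  define P where "P = d1y 0"
  define Q where "Q = d2y 0"
  have "tw_ode v p q P Q"
    unfolding tw_ode_def
  proof
    fix y
    have time: "d1t 0 y = - v * P y" "d2t 0 y = - v * Q y"
      using H[of y] DERIV_moving_frame_time_unique[of p y v "d1t 0 y" "P y"]
        DERIV_moving_frame_time_unique[of q y v "d2t 0 y" "Q y"]
      unfolding P_def Q_def by blast+
    let ?du = "(Q y - P y) / 2"
    have "d1yy 0 y = ((q y - p y) / 2 - v) * P y - (q y - p y) * max ?du 0"
      using H[of y] time(1) tfe_exchange_eq_max[where du = ?du and a = "p y" and b = "q y"]
      unfolding P_def[symmetric] Q_def[symmetric] by (simp add: algebra_simps)
    moreover have "d2yy 0 y = - ((q y - p y) / 2 + v) * Q y - (q y - p y) * min ?du 0"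
      using H[of y] time(2) tfe_exchange_eq_min[where du = ?du and a = "p y" and b = "q y"]
      unfolding P_def[symmetric] Q_def[symmetric] by (simp add: algebra_simps)
    ultimately show "(p has_real_derivative P y) (at y) \<and> (q has_real_derivative Q y) (at y) \<and>
     (P has_real_derivative ((q y - p y) / 2 - v) * P y - (q y - p y) * max ?du 0) (at y) \<and>
     (Q has_real_derivative - ((q y - p y) / 2 + v) * Q y - (q y - p y) * min ?du 0) (at y)"
      using H[of y] unfolding P_def Q_def by simp
  qed
  then show ?thesis using that unfolding p_def q_def by blast
qed

lemma tfe_traveling_wave_of_tw_ode:
  assumes ode: "tw_ode v p q P Q"
    and "((\<lambda>x. (p x, q x)) \<longlongrightarrow> gm) at_bot" "((\<lambda>x. (p x, q x)) \<longlongrightarrow> gp) at_top"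
  shows "tfe_traveling_wave (\<lambda>x. (p x, q x)) v gm gp"
proof -
  define P' where "P' x = ((q x - p x) / 2 - v) * P x - (q x - p x) * max ((Q x - P x) / 2) 0" for x
  define Q' where "Q' x = - ((q x - p x) / 2 + v) * Q x - (q x - p x) * min ((Q x - P x) / 2) 0" for x
  have d: "(p has_real_derivative P x) (at x)" "(q has_real_derivative Q x) (at x)"
    "(P has_real_derivative P' x) (at x)" "(Q has_real_derivative Q' x) (at x)" for x
    using ode unfolding tw_ode_def P'_def Q'_def by auto
  have "continuous_on UNIV (\<lambda>x. (p x, q x))"
    using d(1,2) by (intro continuous_on_Pair continuous_at_imp_continuous_on) (auto intro: DERIV_isCont)
  moreover have "tfe_classical_solution (\<lambda>t y. p (y - v * t)) (\<lambda>t y. q (y - v * t))"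
    unfolding tfe_classical_solution_def Let_def
  proof (intro exI allI impI conjI)
    fix t y :: real
    let ?x = "y - v * t"
    show "((\<lambda>s. p (y - v * s)) has_real_derivative - v * P ?x) (at t within {0..})"
      "((\<lambda>s. q (y - v * s)) has_real_derivative - v * Q ?x) (at t within {0..})"
      by (intro DERIV_moving_frame_time d)+
    show "((\<lambda>z. p (z - v * t)) has_real_derivative P ?x) (at y)"
      "((\<lambda>z. q (z - v * t)) has_real_derivative Q ?x) (at y)"
      "((\<lambda>z. P (z - v * t)) has_real_derivative P' ?x) (at y)"
      "((\<lambda>z. Q (z - v * t)) has_real_derivative Q' ?x) (at y)"
      by (intro DERIV_moving_frame_space d)+
    show "- v * P ?x + ((Q ?x - P ?x) / 2 * p ?x + (q ?x - p ?x) / 2 * P ?x) - P' ?x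
        = - tfe_exchange ((Q ?x - P ?x) / 2) (p ?x) (q ?x)"
      using tfe_exchange_eq_max[where du = "(Q ?x - P ?x) / 2" and a = "p ?x" and b = "q ?x"]
      unfolding P'_def by (simp add: algebra_simps)
    show "- v * Q ?x + (- ((Q ?x - P ?x) / 2) * q ?x + - ((q ?x - p ?x) / 2) * Q ?x) - Q' ?x
        = tfe_exchange ((Q ?x - P ?x) / 2) (p ?x) (q ?x)"
      using tfe_exchange_eq_min[where du = "(Q ?x - P ?x) / 2" and a = "p ?x" and b = "q ?x"]
      unfolding Q'_def by (simp add: algebra_simps)
  qed
  ultimately show ?thesis
    using assms(2,3) by (simp add: tfe_traveling_wave_def)
qed

lemma tfe_stationary_const: "tfe_stationary s"
  unfolding tfe_stationary_def tfe_classical_solution_def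
  by (rule exI[of _ "\<lambda>t y. 0"])+ (simp add: tfe_exchange_def)

lemma tw_ode_swap:
  assumes "tw_ode v p q P Q"
  shows "tw_ode v q p Q P"
proof -
  have flip: "(P x - Q x) / 2 = - ((Q x - P x) / 2)" for x
    by (simp only: minus_divide_left minus_diff_eq)
  have neg_max_min: "max (- z) 0 = - min z 0" "min (- z) 0 = - max z 0" for z :: real
    by (auto simp: max_def min_def)
  from assms show ?thesis
    unfolding tw_ode_def flip neg_max_min by (simp add: algebra_simps diff_divide_distrib)
qed

lemma tw_ode_reflect:
  assumes "tw_ode v p q P Q"
  shows "tw_ode (- v) (\<lambda>x. - p (- x)) (\<lambda>x. - q (- x)) (\<lambda>x. P (- x)) (\<lambda>x. Q (- x))"
  unfolding tw_ode_def
proof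
  fix x :: real
  have mirror: "((\<lambda>x. f (- x)) has_real_derivative - D) (at x)"
    if "(f has_real_derivative D) (at (- x))" for f :: "real \<Rightarrow> real" and D
    using that by (simp add: DERIV_mirror)
  from assms have "(p has_real_derivative P (- x)) (at (- x))" "(q has_real_derivative Q (- x)) (at (- x))"
    "(P has_real_derivative ((q (- x) - p (- x)) / 2 - v) * P (- x)
        - (q (- x) - p (- x)) * max ((Q (- x) - P (- x)) / 2) 0) (at (- x))"
    "(Q has_real_derivative - ((q (- x) - p (- x)) / 2 + v) * Q (- x)
        - (q (- x) - p (- x)) * min ((Q (- x) - P (- x)) / 2) 0) (at (- x))"
    unfolding tw_ode_def by blast+
  from this[THEN mirror] show "((\<lambda>x. - p (- x)) has_real_derivative P (- x)) (at x) \<and>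
    ((\<lambda>x. - q (- x)) has_real_derivative Q (- x)) (at x) \<and>
    ((\<lambda>x. P (- x)) has_real_derivative ((- q (- x) - - p (- x)) / 2 - - v) * P (- x)
        - (- q (- x) - - p (- x)) * max ((Q (- x) - P (- x)) / 2) 0) (at x) \<and>
    ((\<lambda>x. Q (- x)) has_real_derivative - ((- q (- x) - - p (- x)) / 2 + - v) * Q (- x)
        - (- q (- x) - - p (- x)) * min ((Q (- x) - P (- x)) / 2) 0) (at x)"
    by (auto dest: DERIV_minus simp: algebra_simps diff_divide_distrib)
qed

section \<open>Fronts leaving the state (-1, -1)\<close>

lemma tw_rhs_abs_le:
  fixes d v P Q M :: real
  assumes "\<bar>d\<bar> \<le> M"
  shows "\<bar>(d / 2 - v) * P - d * max ((Q - P) / 2) 0\<bar> + \<bar>- (d / 2 + v) * Q - d * min ((Q - P) / 2) 0\<bar>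
    \<le> (M + \<bar>v\<bar>) * (\<bar>P\<bar> + \<bar>Q\<bar>)"
proof -
  let ?z = "(Q - P) / 2"
  have "0 \<le> M" using assms by linarith
  have "\<bar>max z 0\<bar> + \<bar>min z 0\<bar> = \<bar>z\<bar>" for z :: real
    by (simp add: max_def min_def)
  then have "\<bar>max ?z 0\<bar> + \<bar>min ?z 0\<bar> = \<bar>?z\<bar>" .
  also have "\<dots> \<le> (\<bar>P\<bar> + \<bar>Q\<bar>) / 2"
    using abs_triangle_ineq4[of Q P] by simp
  finally have "M * (\<bar>max ?z 0\<bar> + \<bar>min ?z 0\<bar>) \<le> M * ((\<bar>P\<bar> + \<bar>Q\<bar>) / 2)"
    using \<open>0 \<le> M\<close> by (rule mult_left_mono)
  then have "M * \<bar>max ?z 0\<bar> + M * \<bar>min ?z 0\<bar> \<le> M * ((\<bar>P\<bar> + \<bar>Q\<bar>) / 2)"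
    by (simp only: distrib_left)
  moreover have "\<bar>(d / 2 - v) * P\<bar> \<le> (M / 2 + \<bar>v\<bar>) * \<bar>P\<bar>" "\<bar>(d / 2 + v) * Q\<bar> \<le> (M / 2 + \<bar>v\<bar>) * \<bar>Q\<bar>"
    unfolding abs_mult by (intro mult_right_mono; use assms in arith)+
  moreover have "\<bar>d * max ?z 0\<bar> \<le> M * \<bar>max ?z 0\<bar>" "\<bar>d * min ?z 0\<bar> \<le> M * \<bar>min ?z 0\<bar>"
    unfolding abs_mult by (rule mult_right_mono[OF assms abs_ge_zero])+
  moreover have "(M / 2 + \<bar>v\<bar>) * \<bar>P\<bar> + (M / 2 + \<bar>v\<bar>) * \<bar>Q\<bar> + M * ((\<bar>P\<bar> + \<bar>Q\<bar>) / 2)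
      = (M + \<bar>v\<bar>) * (\<bar>P\<bar> + \<bar>Q\<bar>)"
    by (simp add: field_simps)
  moreover have "\<bar>- (d / 2 + v) * Q\<bar> = \<bar>(d / 2 + v) * Q\<bar>"
    by (simp only: mult_minus_left abs_minus_cancel)
  ultimately show ?thesis
    using abs_triangle_ineq4[of "(d / 2 - v) * P" "d * max ?z 0"]
      abs_triangle_ineq4[of "- (d / 2 + v) * Q" "d * min ?z 0"] by linarith
qed

locale tw_front =
  fixes v :: real and p q P Q :: "real \<Rightarrow> real" and a b :: real
  assumes ode: "tw_ode v p q P Q"
    and p_bot: "(p \<longlongrightarrow> -1) at_bot" and q_bot: "(q \<longlongrightarrow> -1) at_bot"
    and p_top: "(p \<longlongrightarrow> a) at_top" and q_top: "(q \<longlongrightarrow> b) at_top"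
begin

lemma dp: "(p has_real_derivative P x) (at x)"
  and dq: "(q has_real_derivative Q x) (at x)"
  and dP: "(P has_real_derivative ((q x - p x) / 2 - v) * P x - (q x - p x) * max ((Q x - P x) / 2) 0) (at x)"
  and dQ: "(Q has_real_derivative - ((q x - p x) / 2 + v) * Q x - (q x - p x) * min ((Q x - P x) / 2) 0) (at x)"
  using ode unfolding tw_ode_def by blast+

lemma continuous: "continuous_on UNIV p" "continuous_on UNIV q" "continuous_on UNIV P" "continuous_on UNIV Q"
  using dp dq dP dQ by (auto intro!: continuous_at_imp_continuous_on DERIV_isCont)

lemma first_integral: "P x + Q x = - v * (p x + q x + 2) - (q x - p x)\<^sup>2 / 2"
proof -
  define F where "F y = P y + Q y + v * (p y + q y) + (q y - p y)\<^sup>2 / 2" for y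
  have "(F has_real_derivative 0) (at y)" for y
  proof -
    have "max z 0 + min z 0 = z" for z :: real by (simp add: max_def min_def)
    from this[of "(Q y - P y) / 2"] have "(q y - p y) * max ((Q y - P y) / 2) 0
        + (q y - p y) * min ((Q y - P y) / 2) 0 = (q y - p y) * ((Q y - P y) / 2)"
      by (simp add: distrib_left[symmetric])
    then show ?thesis
      unfolding F_def[abs_def] by (auto intro!: derivative_eq_intros dp dq dP dQ simp: field_simps)
  qed
  then have F_const: "F y = F 0" for y
    using DERIV_isconst_all by blast
  have sum_deriv: "((\<lambda>y. p y + q y) has_real_derivative P y + Q y) (at y)" for y
    by (auto intro!: derivative_eq_intros dp dq)
  have PQ_eq: "P y + Q y = F 0 - v * (p y + q y) - (q y - p y)\<^sup>2 / 2" for y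
    using F_const[of y] unfolding F_def by simp
  have "((\<lambda>y. P y + Q y) \<longlongrightarrow> F 0 - v * (-1 + -1) - (-1 - -1)\<^sup>2 / 2) at_bot"
    unfolding PQ_eq by (intro tendsto_intros p_bot q_bot) simp_all
  from deriv_tendsto_zero_at_bot[OF tendsto_add[OF p_bot q_bot] sum_deriv this]
  have "F 0 = - 2 * v"
    by simp
  with F_const[of x] show ?thesis
    unfolding F_def by (simp add: algebra_simps)
qed

lemma speed_relation: "v * (a + b + 2) = - (b - a)\<^sup>2 / 2"
proof -
  have "((\<lambda>x. P x + Q x) \<longlongrightarrow> - v * (a + b + 2) - (b - a)\<^sup>2 / 2) at_top"
    unfolding first_integral by (intro tendsto_intros p_top q_top) simp_all
  from deriv_tendsto_zero_at_top[OF tendsto_add[OF p_top q_top] _ this]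
  have "- v * (a + b + 2) - (b - a)\<^sup>2 / 2 = 0"
    by (auto intro!: derivative_eq_intros dp dq)
  then show ?thesis by simp
qed

lemma end_sum_le_if_speed_zero:
  assumes "v = 0"
  shows "a + b + 2 \<le> 0"
proof -
  have "((\<lambda>x. p x + q x) has_real_derivative P x + Q x) (at x)" "P x + Q x \<le> 0" for x
    by (auto intro!: derivative_eq_intros dp dq simp: first_integral assms)
  from deriv_nonpos_between_limits[OF this tendsto_add[OF p_bot q_bot] tendsto_add[OF p_top q_top], of 0]
  show ?thesis by linarith
qed

lemma PQ_vanish_everywhere:
  assumes "P c = 0" "Q c = 0"
  shows "P x = 0 \<and> Q x = 0"
proof -
  have "continuous_on {min c x..max c x} (\<lambda>y. q y - p y)"
    using continuous by (auto intro!: continuous_intros intro: continuous_on_subset)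
  then obtain M where M: "\<And>y. y \<in> {min c x..max c x} \<Longrightarrow> \<bar>q y - p y\<bar> \<le> M"
    using continuous_on_compact_bound[of "{min c x..max c x}"] by (metis compact_Icc real_norm_def)
  show ?thesis
  proof (rule pair_vanishes[where X = P and Y = Q and c = c and x = x and K = "M + \<bar>v\<bar>"])
    fix y assume y: "y \<in> {min c x..max c x}"
    show "(P has_real_derivative ((q y - p y) / 2 - v) * P y - (q y - p y) * max ((Q y - P y) / 2) 0) (at y)
      \<and> (Q has_real_derivative - ((q y - p y) / 2 + v) * Q y - (q y - p y) * min ((Q y - P y) / 2) 0) (at y)"
      using dP dQ by blast
    show "\<bar>((q y - p y) / 2 - v) * P y - (q y - p y) * max ((Q y - P y) / 2) 0\<bar>
      + \<bar>- ((q y - p y) / 2 + v) * Q y - (q y - p y) * min ((Q y - P y) / 2) 0\<bar>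
      \<le> (M + \<bar>v\<bar>) * (\<bar>P y\<bar> + \<bar>Q y\<bar>)"
      by (rule tw_rhs_abs_le[OF M[OF y]])
  qed (use assms in auto)
qed

lemma end_state_if_PQ_zero:
  assumes "P c = 0" "Q c = 0"
  shows "a = -1 \<and> b = -1"
proof -
  have "(p has_real_derivative 0) (at x)" "(q has_real_derivative 0) (at x)" for x
    using dp[of x] dq[of x] PQ_vanish_everywhere[OF assms, of x] by simp_all
  then have "p 0 = -1" "p 0 = a" "q 0 = -1" "q 0 = b"
    using deriv_zero_eq_limit p_bot p_top q_bot q_top by (metis trivial_limit_at_bot_linorder trivial_limit_at_top_linorder)+
  then show ?thesis by simp
qed

lemma deriv_P_if_Q_le_P:
  "Q x \<le> P x \<Longrightarrow> (P has_real_derivative ((q x - p x) / 2 - v) * P x) (at x)"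
  using dP[of x] by (simp add: max_def)

lemma deriv_Q_if_P_le_Q:
  assumes "P x \<le> Q x"
  shows "(Q has_real_derivative - ((q x - p x) / 2 + v) * Q x) (at x)"
proof -
  have "min ((Q x - P x) / 2) 0 = 0" using assms by simp
  with dQ[of x] show ?thesis by simp
qed

lemma deriv_3Q_minus_P_if_Q_le_P:
  assumes "Q x \<le> P x"
  shows "((\<lambda>x. 3 * Q x - P x) has_real_derivative - (v + (q x - p x)) * (3 * Q x - P x)) (at x)"
proof -
  have mx: "min ((Q x - P x) / 2) 0 = (Q x - P x) / 2" "max ((Q x - P x) / 2) 0 = 0"
    using assms by auto
  have "3 * (- ((q x - p x) / 2 + v) * Q x - (q x - p x) * min ((Q x - P x) / 2) 0)
      - (((q x - p x) / 2 - v) * P x - (q x - p x) * max ((Q x - P x) / 2) 0)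
      = - (v + (q x - p x)) * (3 * Q x - P x)"
    unfolding mx by (simp add: field_simps)
  then show ?thesis
    by (rule DERIV_cong[OF DERIV_diff[OF DERIV_cmult[OF dQ] dP]])
qed

lemma deriv_3Q_minus_P_if_P_le_Q:
  assumes "P x \<le> Q x"
  shows "((\<lambda>x. 3 * Q x - P x) has_real_derivative - v * (3 * Q x - P x) - (q x - p x) * (P x + Q x)) (at x)"
proof -
  have mx: "min ((Q x - P x) / 2) 0 = 0" "max ((Q x - P x) / 2) 0 = (Q x - P x) / 2"
    using assms by auto
  have "3 * (- ((q x - p x) / 2 + v) * Q x - (q x - p x) * min ((Q x - P x) / 2) 0)
      - (((q x - p x) / 2 - v) * P x - (q x - p x) * max ((Q x - P x) / 2) 0)
      = - v * (3 * Q x - P x) - (q x - p x) * (P x + Q x)"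
    unfolding mx by (simp add: field_simps)
  then show ?thesis
    by (rule DERIV_cong[OF DERIV_diff[OF DERIV_cmult[OF dQ] dP]])
qed

lemma deriv_3P_minus_Q_if_P_le_Q:
  assumes "P x \<le> Q x"
  shows "((\<lambda>x. 3 * P x - Q x) has_real_derivative (q x - p x - v) * (3 * P x - Q x)) (at x)"
proof -
  have mx: "min ((Q x - P x) / 2) 0 = 0" "max ((Q x - P x) / 2) 0 = (Q x - P x) / 2"
    using assms by auto
  have "3 * (((q x - p x) / 2 - v) * P x - (q x - p x) * max ((Q x - P x) / 2) 0)
      - (- ((q x - p x) / 2 + v) * Q x - (q x - p x) * min ((Q x - P x) / 2) 0)
      = (q x - p x - v) * (3 * P x - Q x)"
    unfolding mx by (simp add: field_simps)
  then show ?thesis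
    by (rule DERIV_cong[OF DERIV_diff[OF DERIV_cmult[OF dP] dQ]])
qed

lemma vanishes_near_if_Q_less_P:
  assumes "Q z < P z" "X z = 0"
    and "\<And>y. Q y \<le> P y \<Longrightarrow> (X has_real_derivative k y * X y) (at y)" "continuous_on UNIV k"
  shows "\<forall>\<^sub>F y in nhds z. X y = 0"
proof (rule linear_ode_vanishes_near[where k = k])
  show "\<forall>\<^sub>F y in nhds z. (X has_real_derivative k y * X y) (at y)"
    using eventually_nhds_less[OF continuous(4,3) assms(1)] by eventually_elim (simp add: assms(3))
qed (use assms in auto)

lemma vanishes_near_if_P_less_Q:
  assumes "P z < Q z" "X z = 0"
    and "\<And>y. P y \<le> Q y \<Longrightarrow> (X has_real_derivative k y * X y) (at y)" "continuous_on UNIV k"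
  shows "\<forall>\<^sub>F y in nhds z. X y = 0"
proof (rule linear_ode_vanishes_near[where k = k])
  show "\<forall>\<^sub>F y in nhds z. (X has_real_derivative k y * X y) (at y)"
    using eventually_nhds_less[OF continuous(3,4) assms(1)] by eventually_elim (simp add: assms(3))
qed (use assms in auto)

end

locale slow_front = tw_front +
  assumes v_neg: "v < 0" and b_less_a: "b < a"
begin

lemma PQ_not_both_zero: "\<not> (P z = 0 \<and> Q z = 0)"
  using end_state_if_PQ_zero b_less_a by force

text \<open>The negative quadrant and the cone \<open>3 Q > P, 3 P > Q\<close> are invariant: on each
  boundary ray the sign of \<open>Q - P\<close> is fixed, and there the component that vanishes solves a
  linear equation, so it cannot leave zero.\<close>
lemma PQ_neg_everywhere:
  assumes "P c < 0" "Q c < 0"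
  shows "P x < 0 \<and> Q x < 0"
proof -
  have "- P x > 0 \<and> - Q x > 0"
  proof (rule pair_positive_everywhere[where X = "\<lambda>y. - P y" and Y = "\<lambda>y. - Q y" and x = x and c = c])
    fix z
    assume "- P z = 0" "- Q z \<ge> 0"
    with PQ_not_both_zero[of z] have "Q z < P z" by auto
    have "\<forall>\<^sub>F y in nhds z. P y = 0"
      by (rule vanishes_near_if_Q_less_P[OF \<open>Q z < P z\<close> _ deriv_P_if_Q_le_P])
        (use \<open>- P z = 0\<close> continuous in \<open>auto intro!: continuous_intros\<close>)
    then show "\<forall>\<^sub>F y in nhds z. - P y = 0"
      by eventually_elim simp
  next
    fix z
    assume "- Q z = 0" "- P z \<ge> 0"
    with PQ_not_both_zero[of z] have "P z < Q z" by auto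
    have "\<forall>\<^sub>F y in nhds z. Q y = 0"
      by (rule vanishes_near_if_P_less_Q[OF \<open>P z < Q z\<close> _ deriv_Q_if_P_le_Q])
        (use \<open>- Q z = 0\<close> continuous in \<open>auto intro!: continuous_intros\<close>)
    then show "\<forall>\<^sub>F y in nhds z. - Q y = 0"
      by eventually_elim simp
  qed (use assms continuous in \<open>auto intro: continuous_intros\<close>)
  then show ?thesis by simp
qed

lemma cone_everywhere:
  assumes "3 * Q c - P c > 0" "3 * P c - Q c > 0"
  shows "3 * Q x - P x > 0 \<and> 3 * P x - Q x > 0"
proof (rule pair_positive_everywhere[where X = "\<lambda>y. 3 * Q y - P y" and Y = "\<lambda>y. 3 * P y - Q y"
      and x = x and c = c])
  fix z
  assume "3 * Q z - P z = 0" "3 * P z - Q z \<ge> 0"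
  with PQ_not_both_zero[of z] have "Q z < P z" by auto
  then show "\<forall>\<^sub>F y in nhds z. 3 * Q y - P y = 0"
    by (rule vanishes_near_if_Q_less_P[OF _ _ deriv_3Q_minus_P_if_Q_le_P])
      (use \<open>3 * Q z - P z = 0\<close> continuous in \<open>auto intro!: continuous_intros\<close>)
next
  fix z
  assume "3 * P z - Q z = 0" "3 * Q z - P z \<ge> 0"
  with PQ_not_both_zero[of z] have "P z < Q z" by auto
  then show "\<forall>\<^sub>F y in nhds z. 3 * P y - Q y = 0"
    by (rule vanishes_near_if_P_less_Q[OF _ _ deriv_3P_minus_Q_if_P_le_Q])
      (use \<open>3 * P z - Q z = 0\<close> continuous in \<open>auto intro!: continuous_intros\<close>)
qed (use assms continuous in \<open>auto intro!: continuous_intros\<close>)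

lemma not_PQ_neg: "\<not> (P c < 0 \<and> Q c < 0)"
proof
  assume "P c < 0 \<and> Q c < 0"
  then have P_nonpos: "P x \<le> 0" and Q_nonpos: "Q x \<le> 0" for x
    using PQ_neg_everywhere less_imp_le by blast+
  have "a \<le> p 0" "p 0 \<le> -1" "b \<le> q 0" "q 0 \<le> -1"
    using deriv_nonpos_between_limits[OF dp P_nonpos p_bot p_top]
      deriv_nonpos_between_limits[OF dq Q_nonpos q_bot q_top] by blast+
  then have "0 \<le> v * (a + b + 2)"
    using v_neg by (intro mult_nonpos_nonpos) auto
  moreover have "0 < (b - a)\<^sup>2"
    using b_less_a by simp
  ultimately show False
    using speed_relation by linarith
qed

lemma q_minus_p_eventually_neg: "\<forall>\<^sub>F x in at_top. q x - p x < 0"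
  by (rule order_tendstoD(2)[OF tendsto_diff[OF q_top p_top]]) (use b_less_a in simp)

lemma not_in_cone: "\<not> (3 * Q c - P c > 0 \<and> 3 * P c - Q c > 0)"
proof
  assume "3 * Q c - P c > 0 \<and> 3 * P c - Q c > 0"
  then have cone: "3 * Q x - P x > 0 \<and> 3 * P x - Q x > 0" for x
    using cone_everywhere by blast
  obtain R where R: "\<And>x. x \<ge> R \<Longrightarrow> q x - p x < 0"
    using q_minus_p_eventually_neg by (auto simp: eventually_at_top_linorder)
  have mono: "3 * Q R - P R \<le> 3 * Q x - P x" if "R \<le> x" for x
  proof (rule DERIV_nonneg_imp_nondecreasing[OF that])
    fix y assume "R \<le> y"
    then have "q y - p y < 0" by (rule R)
    have "0 < 3 * Q y - P y" "0 < P y + Q y"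
      using cone[of y] by linarith+
    show "\<exists>D. ((\<lambda>x. 3 * Q x - P x) has_real_derivative D) (at y) \<and> D \<ge> 0"
    proof (cases "Q y \<le> P y")
      case True
      have "0 < - (v + (q y - p y))"
        using \<open>q y - p y < 0\<close> v_neg by linarith
      with deriv_3Q_minus_P_if_Q_le_P[OF True] \<open>0 < 3 * Q y - P y\<close> show ?thesis
        by (intro exI conjI) (auto intro: mult_nonneg_nonneg)
    next
      case False
      have "0 \<le> - v * (3 * Q y - P y)"
        using v_neg \<open>0 < 3 * Q y - P y\<close> by (intro mult_nonneg_nonneg) simp_all
      moreover have "(q y - p y) * (P y + Q y) \<le> 0"
        using \<open>q y - p y < 0\<close> \<open>0 < P y + Q y\<close> by (intro mult_nonpos_nonneg) simp_all
      ultimately show ?thesis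
        using deriv_3Q_minus_P_if_P_le_Q[of y] False by (intro exI conjI) auto
    qed
  qed
  have "((\<lambda>x. 3 * q x - p x) \<longlongrightarrow> 3 * b - a) at_top"
    by (intro tendsto_intros q_top p_top)
  moreover have "((\<lambda>x. 3 * q x - p x) has_real_derivative 3 * Q x - P x) (at x)" for x
    by (auto intro!: derivative_eq_intros dp dq)
  ultimately have "3 * Q R - P R \<le> 0"
    using mono by (rule tendsto_at_top_deriv_lower_bound_nonpos)
  with cone[of R] show False by simp
qed

lemma Q_less_P: "Q x < P x"
proof -
  have QP_ne: "Q y \<noteq> P y" for y
  proof
    assume "Q y = P y"
    then have "(P y = 0 \<and> Q y = 0) \<or> (P y < 0 \<and> Q y < 0) \<or> (3 * Q y - P y > 0 \<and> 3 * P y - Q y > 0)"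
      by auto
    with PQ_not_both_zero not_PQ_neg not_in_cone show False by blast
  qed
  have "\<not> Q x - P x > 0"
  proof
    assume "Q x - P x > 0"
    have "Q y - P y > 0" for y
      by (rule positive_everywhere[of "\<lambda>y. Q y - P y"])
        (use \<open>Q x - P x > 0\<close> QP_ne continuous in \<open>auto intro!: continuous_intros\<close>)
    then have nonpos: "P y - Q y \<le> 0" for y
      by (simp add: less_imp_le)
    have "((\<lambda>y. p y - q y) has_real_derivative P y - Q y) (at y)" for y
      by (auto intro!: derivative_eq_intros dp dq)
    from deriv_nonpos_between_limits[OF this nonpos tendsto_diff[OF p_bot q_bot] tendsto_diff[OF p_top q_top]]
    have "a - b \<le> p 0 - q 0" "p 0 - q 0 \<le> -1 - -1" .
    with b_less_a show False by simp
  qed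
  with QP_ne[of x] show ?thesis by linarith
qed

lemma q_minus_p_nonpos: "q x - p x \<le> 0"
proof -
  have "((\<lambda>y. q y - p y) has_real_derivative Q y - P y) (at y)" "Q y - P y \<le> 0" for y
    using Q_less_P[of y] by (auto intro!: derivative_eq_intros dp dq)
  from deriv_nonpos_between_limits(2)[OF this tendsto_diff[OF q_bot p_bot] tendsto_diff[OF q_top p_top]]
  show ?thesis by simp
qed

lemma profile_line: "3 * q x - p x + 2 = 0"
proof -
  have slope_zero: "3 * Q y - P y = 0" for y
  proof (rule linear_ode_deriv_of_convergent_vanishes[where Z = "\<lambda>y. 3 * q y - p y"
        and A = "\<lambda>y. 3 * Q y - P y" and k = "\<lambda>y. - (v + (q y - p y))" and x = y])
    show "((\<lambda>y. 3 * q y - p y) has_real_derivative 3 * Q y - P y) (at y)" for y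
      by (auto intro!: derivative_eq_intros dp dq)
    show "((\<lambda>y. 3 * Q y - P y) has_real_derivative - (v + (q y - p y)) * (3 * Q y - P y)) (at y)" for y
      using deriv_3Q_minus_P_if_Q_le_P Q_less_P less_imp_le by blast
    show "0 \<le> - (v + (q y - p y))" for y
      using q_minus_p_nonpos[of y] v_neg by simp
    show "((\<lambda>y. 3 * q y - p y) \<longlongrightarrow> 3 * b - a) at_top"
      by (intro tendsto_intros q_top p_top)
  qed (use continuous in \<open>auto intro!: continuous_intros\<close>)
  have "((\<lambda>y. 3 * q y - p y + 2) has_real_derivative 3 * Q y - P y) (at y)" for y
    by (auto intro!: derivative_eq_intros dp dq)
  then have "((\<lambda>y. 3 * q y - p y + 2) has_real_derivative 0) (at y)" for y
    unfolding slope_zero .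
  moreover have "((\<lambda>y. 3 * q y - p y + 2) \<longlongrightarrow> 3 * -1 - -1 + 2) at_bot"
    by (intro tendsto_intros q_bot p_bot)
  ultimately have "3 * q x - p x + 2 = 3 * -1 - -1 + 2"
    by (rule deriv_zero_eq_limit) simp
  then show ?thesis by simp
qed

lemma end_state: "a = -1 - 6 * v \<and> b = -1 - 2 * v"
proof -
  have "((\<lambda>y. 3 * q y - p y + 2) \<longlongrightarrow> 3 * b - a + 2) at_top"
    by (intro tendsto_intros q_top p_top)
  then have "((\<lambda>_::real. 0) \<longlongrightarrow> 3 * b - a + 2) at_top"
    unfolding profile_line .
  then have a_eq: "a = 3 * b + 2"
    by (simp add: tendsto_const_iff[OF trivial_limit_at_top_linorder])
  then have "(b + 1) * (4 * v + 2 * (b + 1)) = 0"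
    using speed_relation by (simp add: power2_eq_square algebra_simps)
  moreover have "b + 1 \<noteq> 0"
    using a_eq b_less_a by auto
  ultimately have "b = -1 - 2 * v"
    by simp
  with a_eq show ?thesis
    by simp
qed

end

context tw_front
begin

lemma end_state_if_speed_neg:
  assumes "v < 0" "a \<noteq> b"
  shows "(b < a \<and> a = -1 - 6 * v \<and> b = -1 - 2 * v \<and> (\<forall>x. 3 * q x - p x + 2 = 0)) \<or>
    (a < b \<and> a = -1 - 2 * v \<and> b = -1 - 6 * v \<and> (\<forall>x. 3 * p x - q x + 2 = 0))"
proof (cases "b < a")
  case True
  interpret slow_front v p q P Q a b
    by unfold_locales (use assms True in auto)
  show ?thesis
    using end_state profile_line True by auto
next
  case False
  interpret slow_front v q p Q P b a
    by unfold_locales (use tw_ode_swap[OF ode] p_bot q_bot p_top q_top assms False in auto)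
  show ?thesis
    using end_state profile_line False assms(2) by auto
qed

end

section \<open>Terraces\<close>

definition front_constraints :: "real \<Rightarrow> real \<Rightarrow> real \<Rightarrow> bool" where
  "front_constraints v a b \<longleftrightarrow>
     v * (a + b + 2) = - (b - a)\<^sup>2 / 2 \<and> (v = 0 \<longrightarrow> a + b + 2 \<le> 0) \<and>
     (v < 0 \<and> a \<noteq> b \<longrightarrow> (a, b) \<in> {(-1 - 6 * v, -1 - 2 * v), (-1 - 2 * v, -1 - 6 * v)})"

lemma (in tw_front) front_constraints: "front_constraints v a b"
  unfolding front_constraints_def
  using speed_relation end_sum_le_if_speed_zero end_state_if_speed_neg by auto

lemma front_constraints_reflect_eq:
  "front_constraints (- v) (- a) (- b) \<longleftrightarrow>
     v * (2 - a - b) = (b - a)\<^sup>2 / 2 \<and> (v = 0 \<longrightarrow> 2 - a - b \<le> 0) \<and>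
     (0 < v \<and> a \<noteq> b \<longrightarrow> (a, b) \<in> {(1 - 6 * v, 1 - 2 * v), (1 - 2 * v, 1 - 6 * v)})"
  unfolding front_constraints_def by (auto simp: power2_eq_square algebra_simps)

lemma terrace_speed_nonneg:
  assumes "front_constraints v1 a b" "front_constraints (- v2) (- a) (- b)" "v1 \<le> v2" "a \<noteq> b"
  shows "0 \<le> v2"
proof (rule ccontr)
  assume "\<not> 0 \<le> v2"
  then have "v1 < 0" "v2 < 0" using assms(3) by auto
  with assms(1,4) have "(a = -1 - 6 * v1 \<and> b = -1 - 2 * v1) \<or> (a = -1 - 2 * v1 \<and> b = -1 - 6 * v1)"
    unfolding front_constraints_def by auto
  then have "a + b = -2 - 8 * v1" "b - a = 4 * v1 \<or> b - a = - (4 * v1)"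
    by auto
  moreover from this(2) have "(b - a)\<^sup>2 = (4 * v1)\<^sup>2"
    by (metis power2_minus)
  ultimately have "a + b = -2 - 8 * v1" "(b - a)\<^sup>2 = 16 * v1\<^sup>2"
    by (simp_all add: power_mult_distrib)
  with assms(2) have relation: "v2 * (4 + 8 * v1) = 8 * v1\<^sup>2"
    unfolding front_constraints_reflect_eq by (simp add: algebra_simps)
  have "4 + 8 * v1 < 0"
  proof (rule ccontr)
    assume "\<not> 4 + 8 * v1 < 0"
    with \<open>v2 < 0\<close> have "v2 * (4 + 8 * v1) \<le> 0" by (simp add: mult_nonpos_nonneg)
    with relation \<open>v1 < 0\<close> show False by simp
  qed
  with assms(3) have "v2 * (4 + 8 * v1) \<le> v1 * (4 + 8 * v1)"
    by (simp add: mult_right_mono_neg)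
  with relation \<open>v1 < 0\<close> show False
    by (simp add: power2_eq_square algebra_simps)
qed

lemma terrace_constraints_solution:
  assumes c1: "front_constraints v1 a b" and c2: "front_constraints (- v2) (- a) (- b)"
    and "v1 \<le> v2"
  shows "(a, b) \<in> {(1/2, -1/2), (-1/2, 1/2)} \<and> v1 = -1/4 \<and> v2 = 1/4"
proof -
  have "a \<noteq> b"
  proof
    assume "a = b"
    with c1 c2 have "v1 * (a + 1) = 0" "v2 * (1 - a) = 0"
      "v1 = 0 \<Longrightarrow> a \<le> -1" "v2 = 0 \<Longrightarrow> 1 \<le> a"
      unfolding front_constraints_def front_constraints_reflect_eq by (auto simp: algebra_simps)
    then show False by (cases "v1 = 0") auto
  qed
  then have "0 < (b - a)\<^sup>2" by simp
  then have "v1 \<noteq> 0" "v2 \<noteq> 0"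
    using c1 c2 unfolding front_constraints_def front_constraints_reflect_eq by auto
  moreover have "0 \<le> v2"
    using terrace_speed_nonneg[OF c1 c2 \<open>v1 \<le> v2\<close> \<open>a \<noteq> b\<close>] .
  moreover have "0 \<le> - v1"
    using terrace_speed_nonneg[of "- v2" "- a" "- b" "- v1"] c1 c2 \<open>v1 \<le> v2\<close> \<open>a \<noteq> b\<close> by simp
  ultimately have "v1 < 0" "0 < v2" by auto
  with c1 c2 \<open>a \<noteq> b\<close> show ?thesis
    unfolding front_constraints_def front_constraints_reflect_eq by auto
qed

lemma tw_front_of_tfe_traveling_wave:
  assumes "tfe_traveling_wave g v (-1, -1) (a, b)"
  obtains P Q where "tw_front v (\<lambda>x. fst (g x)) (\<lambda>x. snd (g x)) P Q a b"
proof -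
  obtain P Q where "tw_ode v (\<lambda>x. fst (g x)) (\<lambda>x. snd (g x)) P Q"
    using tw_ode_of_tfe_traveling_wave[OF assms] .
  moreover have "(g \<longlongrightarrow> (-1, -1)) at_bot" "(g \<longlongrightarrow> (a, b)) at_top"
    using assms unfolding tfe_traveling_wave_def by auto
  note this[THEN tendsto_fst] this[THEN tendsto_snd]
  ultimately have "tw_front v (\<lambda>x. fst (g x)) (\<lambda>x. snd (g x)) P Q a b"
    by unfold_locales simp_all
  then show ?thesis by (rule that)
qed

lemma tw_front_of_tfe_traveling_wave_reflected:
  assumes "tfe_traveling_wave g v (a, b) (1, 1)"
  obtains P Q where "tw_front (- v) (\<lambda>x. - fst (g (- x))) (\<lambda>x. - snd (g (- x))) P Q (- a) (- b)"
proof -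
  obtain P Q where "tw_ode v (\<lambda>x. fst (g x)) (\<lambda>x. snd (g x)) P Q"
    using tw_ode_of_tfe_traveling_wave[OF assms] .
  then have "tw_ode (- v) (\<lambda>x. - fst (g (- x))) (\<lambda>x. - snd (g (- x))) (\<lambda>x. P (- x)) (\<lambda>x. Q (- x))"
    by (rule tw_ode_reflect)
  moreover have "(g \<longlongrightarrow> (a, b)) at_bot" "(g \<longlongrightarrow> (1, 1)) at_top"
    using assms unfolding tfe_traveling_wave_def by auto
  then have "((\<lambda>x. g (- x)) \<longlongrightarrow> (1, 1)) at_bot" "((\<lambda>x. g (- x)) \<longlongrightarrow> (a, b)) at_top"
    using filterlim_at_top_mirror[of g] filterlim_at_bot_mirror[of g] by blast+
  note this[THEN tendsto_fst, THEN tendsto_minus] this[THEN tendsto_snd, THEN tendsto_minus]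
  ultimately have "tw_front (- v) (\<lambda>x. - fst (g (- x))) (\<lambda>x. - snd (g (- x)))
      (\<lambda>x. P (- x)) (\<lambda>x. Q (- x)) (- a) (- b)"
    by unfold_locales simp_all
  then show ?thesis by (rule that)
qed

lemma tfe_terrace2_fronts:
  assumes "tfe_terrace2 (-1, -1) (a, b) (1, 1) g1 v1 g2 v2"
  obtains P1 Q1 P2 Q2 where
    "tw_front v1 (\<lambda>x. fst (g1 x)) (\<lambda>x. snd (g1 x)) P1 Q1 a b"
    "tw_front (- v2) (\<lambda>x. - fst (g2 (- x))) (\<lambda>x. - snd (g2 (- x))) P2 Q2 (- a) (- b)"
    "v1 \<le> v2"
proof -
  have "tfe_traveling_wave g1 v1 (-1, -1) (a, b)" "tfe_traveling_wave g2 v2 (a, b) (1, 1)" "v1 \<le> v2"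
    using assms unfolding tfe_terrace2_def by auto
  obtain P1 Q1 where "tw_front v1 (\<lambda>x. fst (g1 x)) (\<lambda>x. snd (g1 x)) P1 Q1 a b"
    using tw_front_of_tfe_traveling_wave[OF \<open>tfe_traveling_wave g1 v1 (-1, -1) (a, b)\<close>] .
  moreover obtain P2 Q2 where
    "tw_front (- v2) (\<lambda>x. - fst (g2 (- x))) (\<lambda>x. - snd (g2 (- x))) P2 Q2 (- a) (- b)"
    using tw_front_of_tfe_traveling_wave_reflected[OF \<open>tfe_traveling_wave g2 v2 (a, b) (1, 1)\<close>] .
  ultimately show ?thesis
    using that \<open>v1 \<le> v2\<close> by blast
qed

lemma tfe_terrace2_speeds:
  assumes "tfe_terrace2 (-1, -1) \<sigma> (1, 1) g1 v1 g2 v2"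
  shows "\<sigma> \<in> {(1/2, -1/2), (-1/2, 1/2)} \<and> v1 = -1/4 \<and> v2 = 1/4"
proof -
  obtain a b where \<sigma>: "\<sigma> = (a, b)" by (cases \<sigma>)
  obtain P1 Q1 P2 Q2 where
    front1: "tw_front v1 (\<lambda>x. fst (g1 x)) (\<lambda>x. snd (g1 x)) P1 Q1 a b" and
    front2: "tw_front (- v2) (\<lambda>x. - fst (g2 (- x))) (\<lambda>x. - snd (g2 (- x))) P2 Q2 (- a) (- b)" and
    "v1 \<le> v2"
    using tfe_terrace2_fronts assms unfolding \<sigma> by blast
  from terrace_constraints_solution[OF front1[THEN tw_front.front_constraints]
      front2[THEN tw_front.front_constraints] \<open>v1 \<le> v2\<close>]
  show ?thesis unfolding \<sigma> .
qed

section \<open>The logistic equation\<close>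

lemma logistic_bounds:
  fixes w :: "real \<Rightarrow> real"
  assumes deriv: "\<And>x. (w has_real_derivative w x * (2 - w x) / 8) (at x)"
    and lim_bot: "(w \<longlongrightarrow> 0) at_bot" and lim_top: "(w \<longlongrightarrow> 2) at_top"
  shows "0 < w x \<and> w x < 2"
proof
  have cont: "continuous_on UNIV w"
    using deriv by (intro continuous_at_imp_continuous_on) (auto intro: DERIV_isCont)
  obtain x1 where "0 < w x1"
    using order_tendstoD(1)[OF lim_top, of 0] by (auto simp: eventually_at_top_linorder)
  show "0 < w x"
  proof (rule linear_ode_positive[where X = w and x = x and k = "\<lambda>x. (2 - w x) / 8"])
    show "(w has_real_derivative (2 - w y) / 8 * w y) (at y)" for y
      using deriv[of y] by (simp add: algebra_simps)
  qed (use cont \<open>0 < w x1\<close> in \<open>auto intro!: continuous_intros\<close>)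
  obtain x0 where "0 < 2 - w x0"
    using order_tendstoD(2)[OF lim_bot, of 2] by (auto simp: eventually_at_bot_linorder)
  have "0 < 2 - w x"
  proof (rule linear_ode_positive[where X = "\<lambda>x. 2 - w x" and x = x and k = "\<lambda>x. - w x / 8"])
    show "((\<lambda>x. 2 - w x) has_real_derivative - w y / 8 * (2 - w y)) (at y)" for y
      using deriv[of y] by (auto intro!: derivative_eq_intros)
  qed (use cont \<open>0 < 2 - w x0\<close> in \<open>auto intro!: continuous_intros\<close>)
  then show "w x < 2" by simp
qed

lemma logistic_logit_linear:
  fixes w :: "real \<Rightarrow> real"
  assumes deriv: "\<And>x. (w has_real_derivative w x * (2 - w x) / 8) (at x)"
    and bounds: "\<And>x. 0 < w x \<and> w x < 2"
  shows "ln (w x) - ln (2 - w x) = x / 4 + (ln (w 0) - ln (2 - w 0))"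
proof -
  define \<phi> where "\<phi> y = ln (w y) - ln (2 - w y) - y / 4" for y
  have "(\<phi> has_real_derivative 0) (at y)" for y
  proof -
    have "((\<lambda>y. ln (w y)) has_real_derivative 1 / w y * (w y * (2 - w y) / 8)) (at y)"
      by (rule DERIV_chain2[OF DERIV_ln_divide deriv]) (use bounds in auto)
    moreover have "((\<lambda>y. 2 - w y) has_real_derivative - (w y * (2 - w y) / 8)) (at y)"
      using DERIV_diff[OF DERIV_const deriv] by simp
    from DERIV_chain2[OF DERIV_ln_divide this]
    have "((\<lambda>y. ln (2 - w y)) has_real_derivative 1 / (2 - w y) * - (w y * (2 - w y) / 8)) (at y)"
      using bounds[of y] by simp
    moreover have "((\<lambda>y. y / 4) has_real_derivative 1 / 4) (at y)"
      by (auto intro!: derivative_eq_intros)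
    ultimately have "(\<phi> has_real_derivative 1 / w y * (w y * (2 - w y) / 8)
        - 1 / (2 - w y) * - (w y * (2 - w y) / 8) - 1 / 4) (at y)"
      unfolding \<phi>_def[abs_def] by (intro DERIV_diff)
    moreover have "1 / w y * (w y * (2 - w y) / 8) - 1 / (2 - w y) * - (w y * (2 - w y) / 8) - 1 / 4 = 0"
      using bounds[of y] by (simp add: field_simps)
    ultimately show ?thesis by (rule DERIV_cong)
  qed
  then have "\<phi> x = \<phi> 0"
    using DERIV_isconst_all by blast
  then show ?thesis
    unfolding \<phi>_def by simp
qed

lemma logit_inj:
  fixes s t :: real
  assumes "0 < s" "s < 2" "0 < t" "t < 2" "ln s - ln (2 - s) = ln t - ln (2 - t)"
  shows "s = t"
proof (rule ccontr)
  have less: "ln s - ln (2 - s) < ln t - ln (2 - t)" if "0 < s" "s < t" "t < 2" for s t :: real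
    using that by (simp add: diff_strict_mono)
  assume "s \<noteq> t"
  with less[of s t] less[of t s] assms show False
    by (cases s t rule: linorder_cases) auto
qed

lemma logistic_translate:
  fixes w1 w2 :: "real \<Rightarrow> real"
  assumes "\<And>x. (w1 has_real_derivative w1 x * (2 - w1 x) / 8) (at x)"
    "(w1 \<longlongrightarrow> 0) at_bot" "(w1 \<longlongrightarrow> 2) at_top"
    and "\<And>x. (w2 has_real_derivative w2 x * (2 - w2 x) / 8) (at x)"
    "(w2 \<longlongrightarrow> 0) at_bot" "(w2 \<longlongrightarrow> 2) at_top"
  shows "\<exists>c. \<forall>x. w2 x = w1 (x + c)"
proof -
  note bounds1 = logistic_bounds[OF assms(1-3)] and bounds2 = logistic_bounds[OF assms(4-6)]
  define c where "c = 4 * ((ln (w2 0) - ln (2 - w2 0)) - (ln (w1 0) - ln (2 - w1 0)))"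
  have "w1 (x + c) = w2 x" for x
  proof (rule logit_inj)
    show "ln (w1 (x + c)) - ln (2 - w1 (x + c)) = ln (w2 x) - ln (2 - w2 x)"
      using logistic_logit_linear[OF assms(1) bounds1, of "x + c"]
        logistic_logit_linear[OF assms(4) bounds2, of x]
      by (simp add: c_def field_simps)
  qed (use bounds1 bounds2 in auto)
  then show ?thesis by (intro exI[of _ c]) simp
qed

context tw_front
begin

lemma sum_limits:
  assumes "(a, b) \<in> {(1/2, -1/2), (-1/2, 1/2)}"
  shows "((\<lambda>x. p x + q x + 2) \<longlongrightarrow> 0) at_bot" "((\<lambda>x. p x + q x + 2) \<longlongrightarrow> 2) at_top"
proof -
  have "((\<lambda>x. p x + q x + 2) \<longlongrightarrow> -1 + -1 + 2) at_bot" "((\<lambda>x. p x + q x + 2) \<longlongrightarrow> a + b + 2) at_top"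
    by (intro tendsto_intros p_bot q_bot p_top q_top)+
  moreover have "a + b + 2 = 2"
    using assms by auto
  ultimately show "((\<lambda>x. p x + q x + 2) \<longlongrightarrow> 0) at_bot" "((\<lambda>x. p x + q x + 2) \<longlongrightarrow> 2) at_top"
    by simp_all
qed

lemma quarter_speed_profile_line:
  assumes "v = -1/4" "(a, b) \<in> {(1/2, -1/2), (-1/2, 1/2)}"
  shows "(b < a \<and> (\<forall>x. 3 * q x - p x + 2 = 0)) \<or> (a < b \<and> (\<forall>x. 3 * p x - q x + 2 = 0))"
  using end_state_if_speed_neg assms by auto

lemma sum_logistic:
  assumes "v = -1/4" "(a, b) \<in> {(1/2, -1/2), (-1/2, 1/2)}"
  shows "((\<lambda>x. p x + q x + 2) has_real_derivative (p x + q x + 2) * (2 - (p x + q x + 2)) / 8) (at x)"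
proof -
  have "(q x - p x)\<^sup>2 = (p x + q x + 2)\<^sup>2 / 4"
    using quarter_speed_profile_line[OF assms]
  proof (elim disjE conjE)
    assume "\<forall>x. 3 * q x - p x + 2 = 0"
    then have "q x - p x = - (p x + q x + 2) / 2" by (auto simp: field_simps)
    then show ?thesis by (simp only: power_divide power2_minus) simp
  next
    assume "\<forall>x. 3 * p x - q x + 2 = 0"
    then have "q x - p x = (p x + q x + 2) / 2" by (auto simp: field_simps)
    then show ?thesis by (simp only: power_divide) simp
  qed
  then have "P x + Q x = (p x + q x + 2) * (2 - (p x + q x + 2)) / 8"
    unfolding first_integral assms(1) by (simp add: power2_eq_square field_simps)
  then show ?thesis
    by (auto intro!: derivative_eq_intros dp dq)
qed

end

lemma tw_front_quarter_unique:
  assumes f1: "tw_front (-1/4) p1 q1 P1 Q1 a b" and f2: "tw_front (-1/4) p2 q2 P2 Q2 a b"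
    and ab: "(a, b) \<in> {(1/2, -1/2), (-1/2, 1/2)}"
  shows "\<exists>c. \<forall>x. p2 x = p1 (x + c) \<and> q2 x = q1 (x + c)"
proof -
  obtain c where c: "\<And>x. p2 x + q2 x + 2 = p1 (x + c) + q1 (x + c) + 2"
    using logistic_translate[of "\<lambda>x. p1 x + q1 x + 2" "\<lambda>x. p2 x + q2 x + 2"]
      tw_front.sum_logistic[OF f1 _ ab] tw_front.sum_limits[OF f1 ab]
      tw_front.sum_logistic[OF f2 _ ab] tw_front.sum_limits[OF f2 ab] by auto
  have "(\<forall>y. 3 * q1 y - p1 y + 2 = 0) \<and> (\<forall>y. 3 * q2 y - p2 y + 2 = 0) \<or>
      (\<forall>y. 3 * p1 y - q1 y + 2 = 0) \<and> (\<forall>y. 3 * p2 y - q2 y + 2 = 0)"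
    using tw_front.quarter_speed_profile_line[OF f1 _ ab] tw_front.quarter_speed_profile_line[OF f2 _ ab] by auto
  then have "p2 x = p1 (x + c) \<and> q2 x = q1 (x + c)" for x
  proof (elim disjE conjE)
    assume "\<forall>y. 3 * q1 y - p1 y + 2 = 0" "\<forall>y. 3 * q2 y - p2 y + 2 = 0"
    then have "3 * q1 (x + c) - p1 (x + c) + 2 = 0" "3 * q2 x - p2 x + 2 = 0" by blast+
    with c[of x] show ?thesis by linarith
  next
    assume "\<forall>y. 3 * p1 y - q1 y + 2 = 0" "\<forall>y. 3 * p2 y - q2 y + 2 = 0"
    then have "3 * p1 (x + c) - q1 (x + c) + 2 = 0" "3 * p2 x - q2 x + 2 = 0" by blast+
    with c[of x] show ?thesis by linarith
  qed
  then show ?thesis by blast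
qed

lemma tfe_terrace2_unique:
  assumes g: "tfe_terrace2 (-1, -1) \<sigma> (1, 1) g1 v1 g2 v2"
    and h: "tfe_terrace2 (-1, -1) \<sigma> (1, 1) h1 w1 h2 w2"
  shows "\<exists>c d. \<forall>\<xi>. h1 \<xi> = g1 (\<xi> + c) \<and> h2 \<xi> = g2 (\<xi> + d)"
proof -
  obtain a b where \<sigma>: "\<sigma> = (a, b)" by (cases \<sigma>)
  have ab: "(a, b) \<in> {(1/2, -1/2), (-1/2, 1/2)}" "(- a, - b) \<in> {(1/2, -1/2), (-1/2, 1/2)}"
    and speeds: "v1 = -1/4" "v2 = 1/4" "w1 = -1/4" "w2 = 1/4"
    using tfe_terrace2_speeds[OF g] tfe_terrace2_speeds[OF h] unfolding \<sigma> by auto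
  have quarter: "v1 = -1/4" "- v2 = -1/4" "w1 = -1/4" "- w2 = -1/4"
    using speeds by simp_all
  obtain Pg1 Qg1 Pg2 Qg2 where
    g1: "tw_front (-1/4) (\<lambda>x. fst (g1 x)) (\<lambda>x. snd (g1 x)) Pg1 Qg1 a b" and
    g2: "tw_front (-1/4) (\<lambda>x. - fst (g2 (- x))) (\<lambda>x. - snd (g2 (- x))) Pg2 Qg2 (- a) (- b)"
    using tfe_terrace2_fronts[OF g[unfolded \<sigma>]] unfolding quarter .
  obtain Ph1 Qh1 Ph2 Qh2 where
    h1: "tw_front (-1/4) (\<lambda>x. fst (h1 x)) (\<lambda>x. snd (h1 x)) Ph1 Qh1 a b" and
    h2: "tw_front (-1/4) (\<lambda>x. - fst (h2 (- x))) (\<lambda>x. - snd (h2 (- x))) Ph2 Qh2 (- a) (- b)"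
    using tfe_terrace2_fronts[OF h[unfolded \<sigma>]] unfolding quarter .
  obtain c where c: "\<And>x. fst (h1 x) = fst (g1 (x + c)) \<and> snd (h1 x) = snd (g1 (x + c))"
    using tw_front_quarter_unique[OF g1 h1 ab(1)] by blast
  obtain d where d: "\<And>x. - fst (h2 (- x)) = - fst (g2 (- (x + d))) \<and> - snd (h2 (- x)) = - snd (g2 (- (x + d)))"
    using tw_front_quarter_unique[OF g2 h2 ab(2)] by blast
  have "h1 \<xi> = g1 (\<xi> + c) \<and> h2 \<xi> = g2 (\<xi> + - d)" for \<xi>
    using c[of \<xi>] d[of "- \<xi>"] by (simp add: prod_eq_iff)
  then show ?thesis by blast
qed

lemma tw_ode_of_logistic:
  fixes w :: "real \<Rightarrow> real"
  assumes deriv: "\<And>x. (w has_real_derivative w x * (2 - w x) / 8) (at x)"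
    and bounds: "\<And>x. 0 \<le> w x \<and> w x \<le> 2"
  shows "tw_ode (-1/4) (\<lambda>x. 3 * w x / 4 - 1) (\<lambda>x. w x / 4 - 1)
    (\<lambda>x. 3 * (w x * (2 - w x) / 8) / 4) (\<lambda>x. w x * (2 - w x) / 8 / 4)"
  unfolding tw_ode_def
proof
  fix x
  define D where "D y = w y * (2 - w y) / 8" for y
  have "0 \<le> D x"
    using bounds[of x] unfolding D_def by simp
  then have exchange: "max ((D x / 4 - 3 * D x / 4) / 2) 0 = 0"
    "min ((D x / 4 - 3 * D x / 4) / 2) 0 = - D x / 4"
    by auto
  have dD: "(D has_real_derivative D x * (1 - w x) / 4) (at x)"
    unfolding D_def[abs_def] by (auto intro!: derivative_eq_intros deriv simp: field_simps)
  show "((\<lambda>x. 3 * w x / 4 - 1) has_real_derivative 3 * D x / 4) (at x) \<and>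
    ((\<lambda>x. w x / 4 - 1) has_real_derivative D x / 4) (at x) \<and>
    ((\<lambda>x. 3 * D x / 4) has_real_derivative
      ((w x / 4 - 1 - (3 * w x / 4 - 1)) / 2 - -1/4) * (3 * D x / 4)
      - (w x / 4 - 1 - (3 * w x / 4 - 1)) * max ((D x / 4 - 3 * D x / 4) / 2) 0) (at x) \<and>
    ((\<lambda>x. D x / 4) has_real_derivative
      - ((w x / 4 - 1 - (3 * w x / 4 - 1)) / 2 + -1/4) * (D x / 4)
      - (w x / 4 - 1 - (3 * w x / 4 - 1)) * min ((D x / 4 - 3 * D x / 4) / 2) 0) (at x)"
    unfolding exchange using deriv[of x] dD
    by (auto intro!: derivative_eq_intros simp: D_def field_simps)
qed

lemma tfe_terrace2_of_tw_ode:
  assumes ode: "tw_ode v p q P Q" and "v \<le> 0"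
    and "(p \<longlongrightarrow> -1) at_bot" "(q \<longlongrightarrow> -1) at_bot" "(p \<longlongrightarrow> a) at_top" "(q \<longlongrightarrow> - a) at_top"
  shows "tfe_terrace2 (-1, -1) (a, - a) (1, 1) (\<lambda>x. (p x, q x)) v (\<lambda>x. (- q (- x), - p (- x))) (- v)"
proof -
  have "tfe_traveling_wave (\<lambda>x. (p x, q x)) v (-1, -1) (a, - a)"
    by (rule tfe_traveling_wave_of_tw_ode[OF ode]) (use assms in \<open>auto intro: tendsto_Pair\<close>)
  moreover have "tfe_traveling_wave (\<lambda>x. (- q (- x), - p (- x))) (- v) (a, - a) (1, 1)"
  proof (rule tfe_traveling_wave_of_tw_ode[OF tw_ode_reflect[OF tw_ode_swap[OF ode]]])
    have "((\<lambda>x. p (- x)) \<longlongrightarrow> a) at_bot" "((\<lambda>x. q (- x)) \<longlongrightarrow> - a) at_bot"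
      using assms(5,6) filterlim_at_top_mirror[of p] filterlim_at_top_mirror[of q] by blast+
    from tendsto_Pair[OF tendsto_minus[OF this(2)] tendsto_minus[OF this(1)]]
    show "((\<lambda>x. (- q (- x), - p (- x))) \<longlongrightarrow> (a, - a)) at_bot"
      by simp
    have "((\<lambda>x. p (- x)) \<longlongrightarrow> -1) at_top" "((\<lambda>x. q (- x)) \<longlongrightarrow> -1) at_top"
      using assms(3,4) filterlim_at_bot_mirror[of p] filterlim_at_bot_mirror[of q] by blast+
    from tendsto_Pair[OF tendsto_minus[OF this(2)] tendsto_minus[OF this(1)]]
    show "((\<lambda>x. (- q (- x), - p (- x))) \<longlongrightarrow> (1, 1)) at_top"
      by simp
  qed
  ultimately show ?thesis
    using \<open>v \<le> 0\<close> unfolding tfe_terrace2_def by (simp add: tfe_stationary_const)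
qed

lemma logistic_tanh:
  fixes w :: "real \<Rightarrow> real"
  defines "w \<equiv> \<lambda>x. 1 + tanh (x / 8)"
  shows "(w has_real_derivative w x * (2 - w x) / 8) (at x)" "0 \<le> w x \<and> w x \<le> 2"
    and "(w \<longlongrightarrow> 0) at_bot" "(w \<longlongrightarrow> 2) at_top"
proof -
  show "(w has_real_derivative w x * (2 - w x) / 8) (at x)"
    unfolding w_def
    by (auto intro!: derivative_eq_intros simp: cosh_real_pos[THEN less_imp_neq, symmetric]
        power2_eq_square field_simps)
  show "0 \<le> w x \<and> w x \<le> 2"
    using tanh_real_bounds[of "x / 8"] unfolding w_def by auto
  have "filterlim (\<lambda>x::real. x * (1 / 8)) at_top at_top"
    by (rule filterlim_at_top_mult_tendsto_pos[OF tendsto_const _ filterlim_ident]) simp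
  then have tanh_top: "((\<lambda>x::real. tanh (x / 8)) \<longlongrightarrow> 1) at_top"
    using filterlim_compose[OF tanh_real_at_top] by simp
  have "((\<lambda>x::real. 1 + tanh (x / 8)) \<longlongrightarrow> 2) at_top" "((\<lambda>x::real. 1 - tanh (x / 8)) \<longlongrightarrow> 0) at_top"
    using tendsto_add[OF tendsto_const tanh_top, of 1] tendsto_diff[OF tendsto_const tanh_top, of 1]
    by simp_all
  then show "(w \<longlongrightarrow> 2) at_top" "(w \<longlongrightarrow> 0) at_bot"
    unfolding w_def filterlim_at_bot_mirror by simp_all
qed

lemma tfe_terrace2_exists:
  assumes "\<sigma> \<in> {(1/2, -1/2), (-1/2, 1/2)}"
  shows "\<exists>g1 g2. tfe_terrace2 (-1, -1) \<sigma> (1, 1) g1 (-1/4) g2 (1/4)"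
proof -
  define w where "w x = 1 + tanh (x / 8)" for x :: real
  note w = logistic_tanh[folded w_def]
  obtain P Q where ode: "tw_ode (-1/4) (\<lambda>x. 3 * w x / 4 - 1) (\<lambda>x. w x / 4 - 1) P Q"
    using tw_ode_of_logistic[OF w(1,2)] by blast
  have lims: "((\<lambda>x. 3 * w x / 4 - 1) \<longlongrightarrow> -1) at_bot" "((\<lambda>x. w x / 4 - 1) \<longlongrightarrow> -1) at_bot"
    "((\<lambda>x. 3 * w x / 4 - 1) \<longlongrightarrow> 1/2) at_top" "((\<lambda>x. w x / 4 - 1) \<longlongrightarrow> - (1/2)) at_top"
    by (auto intro!: tendsto_eq_intros w(3,4))
  from assms consider "\<sigma> = (1/2, - (1/2))" | "\<sigma> = (- (1/2), - (- (1/2)))" by force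
  then show ?thesis
  proof cases
    case 1
    from tfe_terrace2_of_tw_ode[OF ode _ lims] show ?thesis
      unfolding 1 by fastforce
  next
    case 2
    from tfe_terrace2_of_tw_ode[OF tw_ode_swap[OF ode] _ lims(2,1,4)] lims(3) show ?thesis
      unfolding 2 by fastforce
  qed
qed

theorem theorem2:
  shows
    "(\<forall>\<sigma>1 \<in> {(1/2, -1/2), (-1/2, 1/2)}.
        \<exists>g1 g2. tfe_terrace2 (-1, -1) \<sigma>1 (1, 1) g1 (-1/4) g2 (1/4)) \<and>
     (\<forall>\<sigma>1 g1 v1 g2 v2. tfe_terrace2 (-1, -1) \<sigma>1 (1, 1) g1 v1 g2 v2 \<longrightarrow>
        \<sigma>1 \<in> {(1/2, -1/2), (-1/2, 1/2)} \<and> v1 = -1/4 \<and> v2 = 1/4) \<and>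
     (\<forall>\<sigma>1 g1 v1 g2 v2 h1 w1 h2 w2.
        tfe_terrace2 (-1, -1) \<sigma>1 (1, 1) g1 v1 g2 v2 \<and>
        tfe_terrace2 (-1, -1) \<sigma>1 (1, 1) h1 w1 h2 w2 \<longrightarrow>
        (\<exists>a b. \<forall>\<xi>. h1 \<xi> = g1 (\<xi> + a) \<and> h2 \<xi> = g2 (\<xi> + b)))"
proof (rule conjI[OF _ conjI], goal_cases existence speeds uniqueness)
  case existence
  show ?case using tfe_terrace2_exists by blast
next
  case speeds
  show ?case using tfe_terrace2_speeds by blast
next
  case uniqueness
  show ?case using tfe_terrace2_unique by blast
qed

end
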